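(* Let $(I,\leq)$ and $(J,\preccurlyeq)$ be finite posets and $\mathcal P\colon J^{\mathrm{op}}\to\mathrm{Fun}(I,\mathrm{vect}_K)$ a thin functor. Then the collection $\{\mathcal P(a)\mid a\in J,\ \mathcal P(a)\neq0\}$ is independent.
   Context: $K$ is a field, $\mathrm{vect}_K$ finite-dimensional $K$-vector spaces, $\mathrm{Fun}(I,\mathrm{vect}_K)$ the category of functors $I\to\mathrm{vect}_K$ with natural transformations (hom sets $\mathrm{Nat}_I$). For $a\in J$, $K(a,-)\colon J\to\mathrm{vect}_K$ is the free functor ($K(a,b)=K$ if $a\preccurlyeq b$, else $0$, identity transitions between nonzero values). $\mathcal R M=\mathrm{Nat}_I(\mathcal P(-),M)$ defines $\mathcal R\colon\mathrm{Fun}(I,\mathrm{vect}_K)\to\mathrm{Fun}(J,\mathrm{vect}_K)$, with left adjoint $\mathcal L$ (given by $\mathcal LF=\mathrm{colim}\big(\bigoplus_{a_0\prec a_1}\mathcal P(a_1)\otimes F(a_0)\rightrightarrows\bigoplus_a\mathcal P(a)\otimes F(a)\big)$), so $\mathcal LK(a,-)\cong\mathcal P(a)$; $\eta_a\colon K(a,-)\to\mathcal R\mathcal LK(a,-)$ is the unit. $\mathcal P$ is thin if each $\eta_a$ is pointwise surjective. For a collection $\mathcal C$ of objects of an abelian category, an object is $\mathcal C$-free if it is isomorphic to a finite direct sum of elements of $\mathcal C$; $\mathcal C$ is independent if for every $\mathcal C$-free object $F$ there is a unique finitely supported function $\beta\colon\mathcal C\to\mathbb N$ with $F\cong\bigoplus_{A\in\mathcal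 C}A^{\beta(A)}$. *)

theory Defs
  imports "Jordan_Normal_Form.Matrix"
begin

text \<open>Functors I -> vect_K for a finite poset I (a type of class order),
  represented concretely: an object is a pair (dimension function, transition maps),
  where the transition map for i <= j is a (dim j x dim i) matrix over K
  (i.e. every finite-dimensional space is K^n).\<close>

type_synonym ('i, 'k) fobj = "('i \<Rightarrow> nat) \<times> ('i \<Rightarrow> 'i \<Rightarrow> 'k mat)"

definition fdim :: "('i, 'k) fobj \<Rightarrow> 'i \<Rightarrow> nat" where
  "fdim M = fst M"

definition fmap :: "('i, 'k) fobj \<Rightarrow> 'i \<Rightarrow> 'i \<Rightarrow> 'k mat" where
  "fmap M = snd M"

definition is_functor :: "('i::order, 'k::field) fobj \<Rightarrow> bool" where
  "is_functor M \<longleftrightarrow>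
     (\<forall>i j. i \<le> j \<longrightarrow> fmap M i j \<in> carrier_mat (fdim M j) (fdim M i)) \<and>
     (\<forall>i. fmap M i i = 1\<^sub>m (fdim M i)) \<and>
     (\<forall>i j k. i \<le> j \<longrightarrow> j \<le> k \<longrightarrow> fmap M j k * fmap M i j = fmap M i k)"

definition is_nat :: "('i::order, 'k::field) fobj \<Rightarrow> ('i, 'k) fobj \<Rightarrow> ('i \<Rightarrow> 'k mat) \<Rightarrow> bool" where
  "is_nat M N \<phi> \<longleftrightarrow>
     (\<forall>i. \<phi> i \<in> carrier_mat (fdim N i) (fdim M i)) \<and>
     (\<forall>i j. i \<le> j \<longrightarrow> \<phi> j * fmap M i j = fmap N i j * \<phi> i)"

definition fiso :: "('i::order, 'k::field) fobj \<Rightarrow> ('i, 'k) fobj \<Rightarrow> bool" where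
  "fiso M N \<longleftrightarrow> (\<exists>\<phi> \<psi>. is_nat M N \<phi> \<and> is_nat N M \<psi> \<and>
     (\<forall>i. \<psi> i * \<phi> i = 1\<^sub>m (fdim M i) \<and> \<phi> i * \<psi> i = 1\<^sub>m (fdim N i)))"

definition fzero :: "('i, 'k::field) fobj" where
  "fzero = (\<lambda>i. 0, \<lambda>i j. 0\<^sub>m 0 0)"

definition is_zero_obj :: "('i::order, 'k::field) fobj \<Rightarrow> bool" where
  "is_zero_obj M \<longleftrightarrow> fiso M fzero"

definition fdsum :: "('i, 'k::field) fobj \<Rightarrow> ('i, 'k) fobj \<Rightarrow> ('i, 'k) fobj" where
  "fdsum M N = (\<lambda>i. fdim M i + fdim N i,
     \<lambda>i j. four_block_mat (fmap M i j) (0\<^sub>m (fdim M j) (fdim N i))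
                          (0\<^sub>m (fdim N j) (fdim M i)) (fmap N i j))"

fun fdsum_list :: "('i, 'k::field) fobj list \<Rightarrow> ('i, 'k) fobj" where
  "fdsum_list [] = fzero"
| "fdsum_list (M # Ms) = fdsum M (fdsum_list Ms)"

definition is_free :: "('i::order, 'k::field) fobj set \<Rightarrow> ('i, 'k) fobj \<Rightarrow> bool" where
  "is_free C F \<longleftrightarrow> is_functor F \<and> (\<exists>xs. set xs \<subseteq> C \<and> fiso F (fdsum_list xs))"

text \<open>F is isomorphic to the direct sum over A in C of A^(beta A) (the order of summands
  being immaterial up to isomorphism, we use any list with the prescribed multiplicities).\<close>
definition decomposes_as :: "('i::order, 'k::field) fobj \<Rightarrow> (('i, 'k) fobj \<Rightarrow> nat) \<Rightarrow> bool" where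
  "decomposes_as F \<beta> \<longleftrightarrow> (\<exists>xs. (\<forall>A. count_list xs A = \<beta> A) \<and> fiso F (fdsum_list xs))"

definition independent :: "('i::order, 'k::field) fobj set \<Rightarrow> bool" where
  "independent C \<longleftrightarrow> (\<forall>F. is_free C F \<longrightarrow>
     (\<exists>!\<beta>. (\<forall>A. A \<notin> C \<longrightarrow> \<beta> A = 0) \<and> finite {A. \<beta> A \<noteq> 0} \<and> decomposes_as F \<beta>))"

text \<open>A functor P : J^op -> Fun(I, vect_K): objects Pobj a, and for a <= b a natural
  transformation Pmap a b : P(b) -> P(a), functorially.\<close>
definition is_op_functor ::
  "('j::order \<Rightarrow> ('i::order, 'k::field) fobj) \<Rightarrow> ('j \<Rightarrow> 'j \<Rightarrow> 'i \<Rightarrow> 'k mat) \<Rightarrow> bool" where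
  "is_op_functor Pobj Pmap \<longleftrightarrow>
     (\<forall>a. is_functor (Pobj a)) \<and>
     (\<forall>a b. a \<le> b \<longrightarrow> is_nat (Pobj b) (Pobj a) (Pmap a b)) \<and>
     (\<forall>a i. Pmap a a i = 1\<^sub>m (fdim (Pobj a) i)) \<and>
     (\<forall>a b c i. a \<le> b \<longrightarrow> b \<le> c \<longrightarrow> Pmap a b i * Pmap b c i = Pmap a c i)"

text \<open>Thinness: the unit eta_a : K(a,-) -> R L K(a,-) = Nat_I(P(-), P(a)) is pointwise
  surjective. Its component at b sends c in K(a,b) = K to c * P(a <= b) if a <= b
  (and K(a,b) = 0 otherwise), so surjectivity says every natural transformation
  P(b) -> P(a) is a scalar multiple of P(a <= b) if a <= b, and is zero otherwise.\<close>
definition thin ::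
  "('j::order \<Rightarrow> ('i::order, 'k::field) fobj) \<Rightarrow> ('j \<Rightarrow> 'j \<Rightarrow> 'i \<Rightarrow> 'k mat) \<Rightarrow> bool" where
  "thin Pobj Pmap \<longleftrightarrow> (\<forall>a b \<phi>. is_nat (Pobj b) (Pobj a) \<phi> \<longrightarrow>
     (if a \<le> b then (\<exists>c. \<forall>i. \<phi> i = c \<cdot>\<^sub>m Pmap a b i)
      else (\<forall>i. \<phi> i = 0\<^sub>m (fdim (Pobj a) i) (fdim (Pobj b) i))))"

end

theory Submission
  imports Defs "Jordan_Normal_Form.Determinant"
begin

(*
  Suppose \<phi> : \<Oplus>xs \<rightarrow> \<Oplus>ys and \<psi> : \<Oplus>ys \<rightarrow> \<Oplus>xs satisfy \<psi> \<circ> \<phi> = 1, where all summands are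
  values of P, and let P(m) \<noteq> 0. Thinness makes every endomorphism of P(m) a scalar and
  every composite P(m) \<rightarrow> P(c) \<rightarrow> P(m) with c \<noteq> m zero (one of the two maps vanishes,
  as c \<le> m and m \<le> c cannot both hold). Restricting \<phi> and \<psi> to the copies of P(m) therefore
  gives scalar matrices a (copies in ys \<times> copies in xs) and b with b a = 1, so P(m) occurs
  in xs at most as often as in ys. Applied to an isomorphism and its inverse this shows that
  multiplicities of nonzero P(m) are isomorphism invariants.
*)

section \<open>Block matrices of a binary direct sum\<close>

definition inj1_mat :: "nat \<Rightarrow> nat \<Rightarrow> 'a::zero_neq_one mat" where
  "inj1_mat m n = mat (m + n) m (\<lambda>(r, c). if r = c then 1 else 0)"

definition inj2_mat :: "nat \<Rightarrow> nat \<Rightarrow> 'a::zero_neq_one mat" where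
  "inj2_mat m n = mat (m + n) n (\<lambda>(r, c). if r = c + m then 1 else 0)"

definition proj1_mat :: "nat \<Rightarrow> nat \<Rightarrow> 'a::zero_neq_one mat" where
  "proj1_mat m n = mat m (m + n) (\<lambda>(r, c). if r = c then 1 else 0)"

definition proj2_mat :: "nat \<Rightarrow> nat \<Rightarrow> 'a::zero_neq_one mat" where
  "proj2_mat m n = mat n (m + n) (\<lambda>(r, c). if c = r + m then 1 else 0)"

lemma inj1_mat_carrier[simp]: "inj1_mat m n \<in> carrier_mat (m + n) m"
  by (simp add: inj1_mat_def)

lemma inj2_mat_carrier[simp]: "inj2_mat m n \<in> carrier_mat (m + n) n"
  by (simp add: inj2_mat_def)

lemma proj1_mat_carrier[simp]: "proj1_mat m n \<in> carrier_mat m (m + n)"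
  by (simp add: proj1_mat_def)

lemma proj2_mat_carrier[simp]: "proj2_mat m n \<in> carrier_mat n (m + n)"
  by (simp add: proj2_mat_def)

lemma if_one_zero_mult: "(if P then 1 else 0) * x = (if P then x else (0::'a::semiring_1))"
  by simp

lemma mult_if_one_zero: "x * (if P then 1 else 0) = (if P then x else (0::'a::semiring_1))"
  by simp

lemma sum_if_eq_shift:
  "(\<Sum>t = 0..<(n::nat). if a = t + d then g t else 0) =
   (if d \<le> a \<and> a < n + d then g (a - d) else (0::'a::comm_monoid_add))"
proof -
  have "(\<Sum>t = 0..<n. if a = t + d then g t else 0) =
      (\<Sum>t = 0..<n. if t = a - d \<and> d \<le> a then g t else 0)"
    by (rule sum.cong[OF refl]) (auto simp del: simp_thms)
  also have "\<dots> = (if d \<le> a \<and> a < n + d then g (a - d) else 0)"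
    by (cases "d \<le> a") (auto simp: sum.delta)
  finally show ?thesis .
qed

lemmas block_mat_simps = scalar_prod_def if_one_zero_mult mult_if_one_zero sum.delta sum.delta'
  sum_if_eq_shift inj1_mat_def inj2_mat_def proj1_mat_def proj2_mat_def

lemma proj1_inj1_mat: "proj1_mat m n * inj1_mat m n = (1\<^sub>m m :: 'a::semiring_1 mat)"
  by (rule eq_matI) (simp_all add: block_mat_simps)

lemma proj2_inj2_mat: "proj2_mat m n * inj2_mat m n = (1\<^sub>m n :: 'a::semiring_1 mat)"
  by (rule eq_matI) (simp_all add: block_mat_simps)

lemma proj1_inj2_mat: "proj1_mat m n * inj2_mat m n = (0\<^sub>m m n :: 'a::semiring_1 mat)"
  by (rule eq_matI) (simp_all add: block_mat_simps)

lemma proj2_inj1_mat: "proj2_mat m n * inj1_mat m n = (0\<^sub>m n m :: 'a::semiring_1 mat)"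
  by (rule eq_matI) (simp_all add: block_mat_simps)

lemma inj_proj_mat_sum:
  "inj1_mat m n * proj1_mat m n + inj2_mat m n * proj2_mat m n =
    (1\<^sub>m (m + n) :: 'a::semiring_1 mat)"
  by (rule eq_matI) (auto simp: block_mat_simps)

lemma inj1_mat_natural:
  assumes "A \<in> carrier_mat m' m" "D \<in> carrier_mat n' n"
  shows "inj1_mat m' n' * A =
    four_block_mat A (0\<^sub>m m' n) (0\<^sub>m n' m) D * (inj1_mat m n :: 'a::semiring_1 mat)"
  using assms by (intro eq_matI) (auto simp: block_mat_simps)

lemma inj2_mat_natural:
  assumes "A \<in> carrier_mat m' m" "D \<in> carrier_mat n' n"
  shows "inj2_mat m' n' * D =
    four_block_mat A (0\<^sub>m m' n) (0\<^sub>m n' m) D * (inj2_mat m n :: 'a::semiring_1 mat)"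
  using assms by (intro eq_matI) (auto simp: block_mat_simps)

lemma proj1_mat_natural:
  assumes "A \<in> carrier_mat m' m" "D \<in> carrier_mat n' n"
  shows "proj1_mat m' n' * four_block_mat A (0\<^sub>m m' n) (0\<^sub>m n' m) D =
    (A :: 'a::semiring_1 mat) * proj1_mat m n"
  using assms by (intro eq_matI) (auto simp: block_mat_simps)

lemma proj2_mat_natural:
  assumes "A \<in> carrier_mat m' m" "D \<in> carrier_mat n' n"
  shows "proj2_mat m' n' * four_block_mat A (0\<^sub>m m' n) (0\<^sub>m n' m) D =
    (D :: 'a::semiring_1 mat) * proj2_mat m n"
  using assms by (intro eq_matI) (auto simp: block_mat_simps)

lemma mult_eq_through_inj_proj_mat:
  fixes A B :: "'a::semiring_1 mat"
  assumes B: "B \<in> carrier_mat nr (m + n)" and A: "A \<in> carrier_mat (m + n) nc"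
  shows "B * A = B * inj1_mat m n * (proj1_mat m n * A) + B * inj2_mat m n * (proj2_mat m n * A)"
proof -
  let ?I1 = "inj1_mat m n :: 'a mat" and ?P1 = "proj1_mat m n :: 'a mat"
    and ?I2 = "inj2_mat m n :: 'a mat" and ?P2 = "proj2_mat m n :: 'a mat"
  have BI1: "B * ?I1 \<in> carrier_mat nr m" and BI2: "B * ?I2 \<in> carrier_mat nr n"
    by (rule mult_carrier_mat[OF B], simp)+
  have "B * A = B * (?I1 * ?P1 + ?I2 * ?P2) * A"
    using B by (simp add: inj_proj_mat_sum)
  also have "B * (?I1 * ?P1 + ?I2 * ?P2) = B * ?I1 * ?P1 + B * ?I2 * ?P2"
    using B mult_add_distrib_mat[OF B mult_carrier_mat[OF inj1_mat_carrier proj1_mat_carrier]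
        mult_carrier_mat[OF inj2_mat_carrier proj2_mat_carrier]]
    by (simp add: assoc_mult_mat[OF B inj1_mat_carrier proj1_mat_carrier]
        assoc_mult_mat[OF B inj2_mat_carrier proj2_mat_carrier])
  also have "(B * ?I1 * ?P1 + B * ?I2 * ?P2) * A = B * ?I1 * ?P1 * A + B * ?I2 * ?P2 * A"
    using A BI1 BI2 by (intro add_mult_distrib_mat) (auto intro: mult_carrier_mat)
  also have "\<dots> = B * ?I1 * (?P1 * A) + B * ?I2 * (?P2 * A)"
    by (simp add: assoc_mult_mat[OF BI1 proj1_mat_carrier A]
        assoc_mult_mat[OF BI2 proj2_mat_carrier A])
  finally show ?thesis .
qed

section \<open>A rank inequality\<close>

lemma dim_le_if_left_inverse_mat:
  fixes A B :: "'a::field mat"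
  assumes A: "A \<in> carrier_mat p n" and B: "B \<in> carrier_mat n p" and BA: "B * A = 1\<^sub>m n"
  shows "n \<le> p"
proof (rule ccontr)
  assume "\<not> n \<le> p"
  \<comment> \<open>Padded to square matrices, B' A' = 1 forces A' B' = 1, yet the last row of A' is zero.\<close>
  define A' where "A' = mat n n (\<lambda>(r, c). if r < p then A $$ (r, c) else 0)"
  define B' where "B' = mat n n (\<lambda>(r, c). if c < p then B $$ (r, c) else 0)"
  have "B' * A' = 1\<^sub>m n"
  proof (rule eq_matI)
    fix r c assume "r < dim_row (1\<^sub>m n)" "c < dim_col (1\<^sub>m n)"
    then have rc: "r < n" "c < n" by auto
    have "(B' * A') $$ (r, c) = (\<Sum>t = 0..<n. if t < p then B $$ (r, t) * A $$ (t, c) else 0)"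
      using rc by (auto simp: A'_def B'_def scalar_prod_def intro!: sum.cong)
    also have "\<dots> = (\<Sum>t = 0..<p. B $$ (r, t) * A $$ (t, c))"
      using \<open>\<not> n \<le> p\<close>
      by (simp add: sum.If_cases Int_absorb1 subset_eq atLeast0LessThan lessThan_def)
    also have "\<dots> = (B * A) $$ (r, c)"
      using A B rc by (simp add: scalar_prod_def)
    finally show "(B' * A') $$ (r, c) = 1\<^sub>m n $$ (r, c)"
      using BA by simp
  qed (simp_all add: A'_def B'_def)
  then have "A' * B' = 1\<^sub>m n"
    by (rule mat_mult_left_right_inverse[rotated 2]) (simp_all add: A'_def B'_def)
  moreover have last: "\<not> n - 1 < p" "n - 1 < n"
    using \<open>\<not> n \<le> p\<close> by auto
  then have "(A' * B') $$ (n - 1, n - 1) = 0"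
    by (simp add: A'_def B'_def scalar_prod_def)
  ultimately show False
    using last by simp
qed

lemma card_le_if_pairing_is_identity:
  fixes a :: "'y \<Rightarrow> 'x \<Rightarrow> 'k::field" and b :: "'x \<Rightarrow> 'y \<Rightarrow> 'k"
  assumes X: "finite X" and Y: "finite Y"
    and pairing: "\<And>k k'. k \<in> X \<Longrightarrow> k' \<in> X \<Longrightarrow> (\<Sum>l\<in>Y. b k' l * a l k) = (if k' = k then 1 else 0)"
  shows "card X \<le> card Y"
proof -
  obtain fx where fx: "bij_betw fx {0..<card X} X" using ex_bij_betw_nat_finite[OF X] by blast
  obtain fy where fy: "bij_betw fy {0..<card Y} Y" using ex_bij_betw_nat_finite[OF Y] by blast
  define A where "A = mat (card Y) (card X) (\<lambda>(r, c). a (fy r) (fx c))"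
  define B where "B = mat (card X) (card Y) (\<lambda>(r, c). b (fx r) (fy c))"
  have "B * A = 1\<^sub>m (card X)"
  proof (rule eq_matI)
    fix r c assume "r < dim_row (1\<^sub>m (card X))" "c < dim_col (1\<^sub>m (card X))"
    then have rc: "r < card X" "c < card X" by auto
    have "(B * A) $$ (r, c) = (\<Sum>t = 0..<card Y. b (fx r) (fy t) * a (fy t) (fx c))"
      using rc by (simp add: A_def B_def scalar_prod_def)
    also have "\<dots> = (\<Sum>l\<in>Y. b (fx r) l * a l (fx c))"
      by (rule sum.reindex_bij_betw[OF fy])
    also have "\<dots> = (if fx r = fx c then 1 else 0)"
      using pairing[of "fx c" "fx r"] bij_betw_apply[OF fx] rc by auto
    also have "\<dots> = 1\<^sub>m (card X) $$ (r, c)"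
      using fx rc by (auto simp: bij_betw_def inj_on_def)
    finally show "(B * A) $$ (r, c) = 1\<^sub>m (card X) $$ (r, c)" .
  qed (simp_all add: A_def B_def)
  then show ?thesis
    by (rule dim_le_if_left_inverse_mat[rotated 2]) (simp_all add: A_def B_def)
qed

section \<open>Natural transformations\<close>

lemma is_natD_carrier: "is_nat M N \<phi> \<Longrightarrow> \<phi> i \<in> carrier_mat (fdim N i) (fdim M i)"
  unfolding is_nat_def by blast

lemma is_natD_commute: "is_nat M N \<phi> \<Longrightarrow> i \<le> j \<Longrightarrow> \<phi> j * fmap M i j = fmap N i j * \<phi> i"
  unfolding is_nat_def by blast

lemma is_functorD_carrier:
  "is_functor M \<Longrightarrow> i \<le> j \<Longrightarrow> fmap M i j \<in> carrier_mat (fdim M j) (fdim M i)"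
  unfolding is_functor_def by blast

lemma is_nat_comp:
  assumes M: "is_functor M" and N: "is_functor N" and L: "is_functor L"
    and \<phi>: "is_nat M N \<phi>" and \<psi>: "is_nat N L \<psi>"
  shows "is_nat M L (\<lambda>i. \<psi> i * \<phi> i)"
  unfolding is_nat_def
proof (intro conjI allI impI)
  show "\<psi> i * \<phi> i \<in> carrier_mat (fdim L i) (fdim M i)" for i
    using is_natD_carrier[OF \<phi>] is_natD_carrier[OF \<psi>] by (rule mult_carrier_mat[rotated])
next
  fix i j :: 'a assume ij: "i \<le> j"
  note c = is_natD_carrier[OF \<phi>, of i] is_natD_carrier[OF \<phi>, of j]
    is_natD_carrier[OF \<psi>, of i] is_natD_carrier[OF \<psi>, of j]
    is_functorD_carrier[OF M ij] is_functorD_carrier[OF N ij] is_functorD_carrier[OF L ij]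
  have "\<psi> j * \<phi> j * fmap M i j = \<psi> j * (fmap N i j * \<phi> i)"
    using c is_natD_commute[OF \<phi> ij] by simp
  also have "\<dots> = fmap L i j * \<psi> i * \<phi> i"
    using c is_natD_commute[OF \<psi> ij] by (simp flip: assoc_mult_mat)
  finally show "\<psi> j * \<phi> j * fmap M i j = fmap L i j * (\<psi> i * \<phi> i)"
    using c by simp
qed

lemma fiso_sym: "fiso M N \<Longrightarrow> fiso N M"
  unfolding fiso_def by blast

lemma fiso_trans:
  assumes M: "is_functor M" and N: "is_functor N" and L: "is_functor L"
    and MN: "fiso M N" and NL: "fiso N L"
  shows "fiso M L"
proof -
  obtain \<phi> \<psi> where \<phi>: "is_nat M N \<phi>" and \<psi>: "is_nat N M \<psi>"
    and inv: "\<And>i. \<psi> i * \<phi> i = 1\<^sub>m (fdim M i) \<and> \<phi> i * \<psi> i = 1\<^sub>m (fdim N i)"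
    using MN unfolding fiso_def by blast
  obtain \<phi>' \<psi>' where \<phi>': "is_nat N L \<phi>'" and \<psi>': "is_nat L N \<psi>'"
    and inv': "\<And>i. \<psi>' i * \<phi>' i = 1\<^sub>m (fdim N i) \<and> \<phi>' i * \<psi>' i = 1\<^sub>m (fdim L i)"
    using NL unfolding fiso_def by blast
  have "\<psi> i * \<psi>' i * (\<phi>' i * \<phi> i) = 1\<^sub>m (fdim M i) \<and> \<phi>' i * \<phi> i * (\<psi> i * \<psi>' i) = 1\<^sub>m (fdim L i)"
    for i
  proof -
    note c = is_natD_carrier[OF \<phi>, of i] is_natD_carrier[OF \<psi>, of i]
      is_natD_carrier[OF \<phi>', of i] is_natD_carrier[OF \<psi>', of i]
    have "\<psi>' i * (\<phi>' i * \<phi> i) = \<phi> i" and "\<phi> i * (\<psi> i * \<psi>' i) = \<psi>' i"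
      using c inv[of i] inv'[of i] by (simp_all flip: assoc_mult_mat)
    then show ?thesis
      using inv[of i] inv'[of i]
        assoc_mult_mat[OF c(2) c(4) mult_carrier_mat[OF c(3) c(1)]]
        assoc_mult_mat[OF c(3) c(1) mult_carrier_mat[OF c(2) c(4)]]
      by simp
  qed
  then show ?thesis
    unfolding fiso_def using is_nat_comp[OF M N L \<phi> \<phi>'] is_nat_comp[OF L N M \<psi>' \<psi>] by blast
qed

section \<open>Direct sums of functors\<close>

lemma fdim_fzero [simp]: "fdim fzero i = 0"
  by (simp add: fzero_def fdim_def)

lemma fmap_fzero [simp]: "fmap fzero i j = 0\<^sub>m 0 0"
  by (simp add: fzero_def fmap_def)

lemma is_zero_obj_if_fdim_zero:
  assumes M: "is_functor M" and zero: "\<And>i. fdim M i = 0"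
  shows "is_zero_obj M"
proof -
  have maps: "fmap M i j = 0\<^sub>m 0 0" if "i \<le> j" for i j
    using is_functorD_carrier[OF M that] zero by auto
  have "is_nat M fzero (\<lambda>i. 0\<^sub>m 0 0)" and "is_nat fzero M (\<lambda>i. 0\<^sub>m 0 0)"
    unfolding is_nat_def using maps zero by auto
  then show ?thesis
    unfolding is_zero_obj_def fiso_def using zero by (auto intro!: exI[of _ "\<lambda>i. 0\<^sub>m 0 0"] eq_matI)
qed

lemma fdim_fdsum [simp]: "fdim (fdsum M N) i = fdim M i + fdim N i"
  by (simp add: fdsum_def fdim_def)

lemma fmap_fdsum:
  "fmap (fdsum M N) i j = four_block_mat (fmap M i j) (0\<^sub>m (fdim M j) (fdim N i))
     (0\<^sub>m (fdim N j) (fdim M i)) (fmap N i j)"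
  by (simp add: fdsum_def fmap_def fdim_def)

lemma is_functor_fzero: "is_functor fzero"
  unfolding is_functor_def by auto

lemma is_functor_fdsum:
  assumes M: "is_functor M" and N: "is_functor N"
  shows "is_functor (fdsum M N)"
  unfolding is_functor_def
proof (intro conjI allI impI)
  show "fmap (fdsum M N) i j \<in> carrier_mat (fdim (fdsum M N) j) (fdim (fdsum M N) i)"
    if "i \<le> j" for i j
    using is_functorD_carrier[OF M that] is_functorD_carrier[OF N that] by (simp add: fmap_fdsum)
  show "fmap (fdsum M N) i i = 1\<^sub>m (fdim (fdsum M N) i)" for i
    using M N by (simp add: fmap_fdsum is_functor_def)
  show "fmap (fdsum M N) j k * fmap (fdsum M N) i j = fmap (fdsum M N) i k"
    if ij: "i \<le> j" and jk: "j \<le> k" for i j k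
  proof -
    note Mij = is_functorD_carrier[OF M ij] and Nij = is_functorD_carrier[OF N ij]
      and Mjk = is_functorD_carrier[OF M jk] and Njk = is_functorD_carrier[OF N jk]
    have "fmap M j k * fmap M i j = fmap M i k" and "fmap N j k * fmap N i j = fmap N i k"
      using M N ij jk unfolding is_functor_def by blast+
    then show ?thesis
      using Mij Nij Mjk Njk is_functorD_carrier[OF M order_trans[OF ij jk]]
        is_functorD_carrier[OF N order_trans[OF ij jk]]
      by (simp add: fmap_fdsum mult_four_block_mat[OF Mjk zero_carrier_mat zero_carrier_mat Njk
            Mij zero_carrier_mat zero_carrier_mat Nij])
  qed
qed

lemma is_functor_fdsum_list: "\<forall>M\<in>set Ms. is_functor M \<Longrightarrow> is_functor (fdsum_list Ms)"
  by (induction Ms) (auto intro: is_functor_fzero is_functor_fdsum)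

lemma is_nat_inj1:
  "is_functor M \<Longrightarrow> is_functor N \<Longrightarrow> is_nat M (fdsum M N) (\<lambda>i. inj1_mat (fdim M i) (fdim N i))"
  unfolding is_nat_def by (auto simp: fmap_fdsum is_functorD_carrier inj1_mat_natural)

lemma is_nat_inj2:
  "is_functor M \<Longrightarrow> is_functor N \<Longrightarrow> is_nat N (fdsum M N) (\<lambda>i. inj2_mat (fdim M i) (fdim N i))"
  unfolding is_nat_def by (auto simp: fmap_fdsum is_functorD_carrier inj2_mat_natural)

lemma is_nat_proj1:
  "is_functor M \<Longrightarrow> is_functor N \<Longrightarrow> is_nat (fdsum M N) M (\<lambda>i. proj1_mat (fdim M i) (fdim N i))"
  unfolding is_nat_def by (auto simp: fmap_fdsum is_functorD_carrier proj1_mat_natural)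

lemma is_nat_proj2:
  "is_functor M \<Longrightarrow> is_functor N \<Longrightarrow> is_nat (fdsum M N) N (\<lambda>i. proj2_mat (fdim M i) (fdim N i))"
  unfolding is_nat_def by (auto simp: fmap_fdsum is_functorD_carrier proj2_mat_natural)

fun fdsum_list_inj :: "('i, 'k::field) fobj list \<Rightarrow> nat \<Rightarrow> 'i \<Rightarrow> 'k mat" where
  "fdsum_list_inj (M # Ms) 0 i = inj1_mat (fdim M i) (fdim (fdsum_list Ms) i)"
| "fdsum_list_inj (M # Ms) (Suc k) i =
     inj2_mat (fdim M i) (fdim (fdsum_list Ms) i) * fdsum_list_inj Ms k i"

fun fdsum_list_proj :: "('i, 'k::field) fobj list \<Rightarrow> nat \<Rightarrow> 'i \<Rightarrow> 'k mat" where
  "fdsum_list_proj (M # Ms) 0 i = proj1_mat (fdim M i) (fdim (fdsum_list Ms) i)"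
| "fdsum_list_proj (M # Ms) (Suc k) i =
     fdsum_list_proj Ms k i * proj2_mat (fdim M i) (fdim (fdsum_list Ms) i)"

lemma fdsum_list_inj_carrier:
  "k < length Ms \<Longrightarrow> fdsum_list_inj Ms k i \<in> carrier_mat (fdim (fdsum_list Ms) i) (fdim (Ms ! k) i)"
proof (induction Ms arbitrary: k)
  case (Cons M Ms)
  then show ?case by (cases k) (auto intro!: mult_carrier_mat[OF inj2_mat_carrier])
qed simp

lemma fdsum_list_proj_carrier:
  "k < length Ms \<Longrightarrow> fdsum_list_proj Ms k i \<in> carrier_mat (fdim (Ms ! k) i) (fdim (fdsum_list Ms) i)"
proof (induction Ms arbitrary: k)
  case (Cons M Ms)
  then show ?case by (cases k) (auto intro!: mult_carrier_mat[OF _ proj2_mat_carrier])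
qed simp

lemma is_nat_fdsum_list_inj:
  assumes "\<forall>M\<in>set Ms. is_functor M" and "k < length Ms"
  shows "is_nat (Ms ! k) (fdsum_list Ms) (fdsum_list_inj Ms k)"
  using assms
proof (induction Ms arbitrary: k)
  case (Cons M Ms)
  have M: "is_functor M" and Ms: "is_functor (fdsum_list Ms)"
    using Cons.prems(1) by (auto intro: is_functor_fdsum_list)
  show ?case
  proof (cases k)
    case 0
    then show ?thesis using is_nat_inj1[OF M Ms] by simp
  next
    case (Suc k')
    then have "k' < length Ms" using Cons.prems(2) by simp
    then show ?thesis
      using Suc Cons.prems
        is_nat_comp[OF _ Ms is_functor_fdsum[OF M Ms] Cons.IH is_nat_inj2[OF M Ms]]
      by (simp add: nth_mem)
  qed
qed simp

lemma is_nat_fdsum_list_proj: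
  assumes "\<forall>M\<in>set Ms. is_functor M" and "k < length Ms"
  shows "is_nat (fdsum_list Ms) (Ms ! k) (fdsum_list_proj Ms k)"
  using assms
proof (induction Ms arbitrary: k)
  case (Cons M Ms)
  have M: "is_functor M" and Ms: "is_functor (fdsum_list Ms)"
    using Cons.prems(1) by (auto intro: is_functor_fdsum_list)
  show ?case
  proof (cases k)
    case 0
    then show ?thesis using is_nat_proj1[OF M Ms] by simp
  next
    case (Suc k')
    then have "k' < length Ms" using Cons.prems(2) by simp
    then show ?thesis
      using Suc Cons.prems
        is_nat_comp[OF is_functor_fdsum[OF M Ms] Ms _ is_nat_proj2[OF M Ms] Cons.IH]
      by (simp add: nth_mem)
  qed
qed simp

lemma fdsum_list_proj_inj:
  assumes "k < length Ms" and "l < length Ms"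
  shows "fdsum_list_proj Ms k i * fdsum_list_inj Ms l i =
    (if k = l then 1\<^sub>m (fdim (Ms ! k) i) else 0\<^sub>m (fdim (Ms ! k) i) (fdim (Ms ! l) i))"
  using assms
proof (induction Ms arbitrary: k l)
  case (Cons M Ms)
  let ?m = "fdim M i" and ?n = "fdim (fdsum_list Ms) i"
  show ?case
  proof (cases k; cases l)
    fix l' assume "k = 0" "l = Suc l'"
    then show ?thesis
      using Cons.prems fdsum_list_inj_carrier[of l' Ms i]
      by (simp flip: assoc_mult_mat[OF proj1_mat_carrier inj2_mat_carrier] add: proj1_inj2_mat)
  next
    fix k' assume "k = Suc k'" "l = 0"
    then show ?thesis
      using Cons.prems fdsum_list_proj_carrier[of k' Ms i]
      by (simp add: assoc_mult_mat[OF _ proj2_mat_carrier inj1_mat_carrier] proj2_inj1_mat)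
  next
    fix k' l' assume kl: "k = Suc k'" "l = Suc l'"
    then have c: "fdsum_list_proj Ms k' i \<in> carrier_mat (fdim (Ms ! k') i) ?n"
      "fdsum_list_inj Ms l' i \<in> carrier_mat ?n (fdim (Ms ! l') i)"
      using Cons.prems fdsum_list_proj_carrier fdsum_list_inj_carrier by auto
    have "proj2_mat ?m ?n * (inj2_mat ?m ?n * fdsum_list_inj Ms l' i) = fdsum_list_inj Ms l' i"
      using c(2) by (simp add: assoc_mult_mat[OF proj2_mat_carrier inj2_mat_carrier c(2), symmetric]
          proj2_inj2_mat)
    then have "fdsum_list_proj Ms k' i * proj2_mat ?m ?n * (inj2_mat ?m ?n * fdsum_list_inj Ms l' i)
        = fdsum_list_proj Ms k' i * fdsum_list_inj Ms l' i"
      using assoc_mult_mat[OF c(1) proj2_mat_carrier mult_carrier_mat[OF inj2_mat_carrier c(2)]]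
      by simp
    then show ?thesis
      using kl Cons.IH[of k' l'] Cons.prems by simp
  qed (simp add: proj1_inj1_mat)
qed simp

text \<open>The identity \<open>\<Sum>\<^sub>l inj\<^sub>l proj\<^sub>l = 1\<close> on a direct sum, stated entrywise because matrices of
  varying dimensions do not form a monoid under addition.\<close>

lemma index_mult_eq_sum_through_summands:
  assumes "B \<in> carrier_mat nr (fdim (fdsum_list Ms) i)"
    and "A \<in> carrier_mat (fdim (fdsum_list Ms) i) nc"
    and r: "r < nr" and c: "c < nc"
  shows "(B * A) $$ (r, c) =
    (\<Sum>l<length Ms. (B * fdsum_list_inj Ms l i * (fdsum_list_proj Ms l i * A)) $$ (r, c))"
  using assms(1,2)
proof (induction Ms arbitrary: B A)
  case Nil
  then show ?case using r c by (simp add: scalar_prod_def)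
next
  case (Cons M Ms)
  let ?m = "fdim M i" and ?n = "fdim (fdsum_list Ms) i"
  let ?B2 = "B * inj2_mat ?m ?n" and ?A2 = "proj2_mat ?m ?n * A"
  have B: "B \<in> carrier_mat nr (?m + ?n)" and A: "A \<in> carrier_mat (?m + ?n) nc"
    using Cons.prems by simp_all
  have B2: "?B2 \<in> carrier_mat nr ?n" and A2: "?A2 \<in> carrier_mat ?n nc"
    by (rule mult_carrier_mat[OF B inj2_mat_carrier], rule mult_carrier_mat[OF proj2_mat_carrier A])
  have "(B * A) $$ (r, c) =
      (B * inj1_mat ?m ?n * (proj1_mat ?m ?n * A)) $$ (r, c) + (?B2 * ?A2) $$ (r, c)"
    using A B r c by (subst mult_eq_through_inj_proj_mat[OF B A]) simp
  also have "(?B2 * ?A2) $$ (r, c) =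
      (\<Sum>l<length Ms. (?B2 * fdsum_list_inj Ms l i * (fdsum_list_proj Ms l i * ?A2)) $$ (r, c))"
    using B2 A2 by (rule Cons.IH)
  also have "\<dots> = (\<Sum>l<length Ms.
      (B * fdsum_list_inj (M # Ms) (Suc l) i * (fdsum_list_proj (M # Ms) (Suc l) i * A)) $$ (r, c))"
  proof (rule sum.cong)
    fix l assume "l \<in> {..<length Ms}"
    then have inj: "fdsum_list_inj Ms l i \<in> carrier_mat ?n (fdim (Ms ! l) i)"
      and proj: "fdsum_list_proj Ms l i \<in> carrier_mat (fdim (Ms ! l) i) ?n"
      using fdsum_list_inj_carrier fdsum_list_proj_carrier by auto
    show "(?B2 * fdsum_list_inj Ms l i * (fdsum_list_proj Ms l i * ?A2)) $$ (r, c) =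
      (B * fdsum_list_inj (M # Ms) (Suc l) i * (fdsum_list_proj (M # Ms) (Suc l) i * A)) $$ (r, c)"
      by (simp add: assoc_mult_mat[OF B inj2_mat_carrier inj]
          assoc_mult_mat[OF proj proj2_mat_carrier A, symmetric])
  qed simp
  finally show ?case
    unfolding length_Cons sum.lessThan_Suc_shift by simp
qed

lemma independentI_count_list:
  assumes member_functor: "\<And>A. A \<in> C \<Longrightarrow> is_functor A"
    and multiplicities: "\<And>xs ys. set xs \<subseteq> C \<Longrightarrow> set ys \<subseteq> C \<Longrightarrow>
      fiso (fdsum_list xs) (fdsum_list ys) \<Longrightarrow> count_list xs = count_list ys"
  shows "independent C"
  unfolding independent_def
proof (intro allI impI)
  fix F assume "is_free C F"
  then obtain xs where F: "is_functor F" and xs: "set xs \<subseteq> C" and Fxs: "fiso F (fdsum_list xs)"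
    unfolding is_free_def by blast
  have sum_functor: "is_functor (fdsum_list zs)" if "set zs \<subseteq> C" for zs
    using that member_functor by (blast intro: is_functor_fdsum_list)
  show "\<exists>!\<beta>. (\<forall>A. A \<notin> C \<longrightarrow> \<beta> A = 0) \<and> finite {A. \<beta> A \<noteq> 0} \<and> decomposes_as F \<beta>"
  proof (rule ex1I[of _ "count_list xs"], intro conjI)
    show "\<forall>A. A \<notin> C \<longrightarrow> count_list xs A = 0"
      using xs by (auto simp: count_list_0_iff)
    show "finite {A. count_list xs A \<noteq> 0}"
      by (rule finite_subset[of _ "set xs"]) (auto simp: count_list_0_iff)
    show "decomposes_as F (count_list xs)"
      unfolding decomposes_as_def using Fxs by blast
  next
    fix \<beta> assume "(\<forall>A. A \<notin> C \<longrightarrow> \<beta> A = 0) \<and> finite {A. \<beta> A \<noteq> 0} \<and> decomposes_as F \<beta>"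
    then obtain ys where outside: "\<forall>A. A \<notin> C \<longrightarrow> \<beta> A = 0"
      and \<beta>: "\<And>A. count_list ys A = \<beta> A" and Fys: "fiso F (fdsum_list ys)"
      unfolding decomposes_as_def by blast
    have \<beta>_eq: "\<beta> = count_list ys"
      by (rule ext, rule \<beta>[symmetric])
    have ys: "set ys \<subseteq> C"
    proof
      fix A assume "A \<in> set ys"
      then have "count_list ys A \<noteq> 0"
        by (simp only: count_list_0_iff not_not)
      with outside show "A \<in> C"
        unfolding \<beta>_eq by (metis (mono_tags))
    qed
    have "fiso (fdsum_list xs) (fdsum_list ys)"
      using fiso_trans[OF sum_functor[OF xs] F sum_functor[OF ys] fiso_sym[OF Fxs] Fys] .
    then have "count_list xs = count_list ys"
      using multiplicities xs ys by blast
    then show "\<beta> = count_list xs"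
      by (simp add: \<beta>_eq)
  qed
qed

section \<open>Thin functors\<close>

locale thin_op_functor =
  fixes Pobj :: "'j::order \<Rightarrow> ('i::order, 'k::field) fobj"
    and Pmap :: "'j \<Rightarrow> 'j \<Rightarrow> 'i \<Rightarrow> 'k mat"
  assumes op_functor: "is_op_functor Pobj Pmap"
    and is_thin: "thin Pobj Pmap"
begin

lemma is_functor_Pobj: "is_functor (Pobj a)"
  using op_functor unfolding is_op_functor_def by blast

lemma is_nat_endo_scalar:
  assumes "is_nat (Pobj m) (Pobj m) \<gamma>"
  obtains c where "\<And>i. \<gamma> i = c \<cdot>\<^sub>m 1\<^sub>m (fdim (Pobj m) i)"
proof -
  have "\<exists>c. \<forall>i. \<gamma> i = c \<cdot>\<^sub>m Pmap m m i"
    using is_thin assms unfolding thin_def by (metis order_refl)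
  moreover have "Pmap m m i = 1\<^sub>m (fdim (Pobj m) i)" for i
    using op_functor unfolding is_op_functor_def by blast
  ultimately show ?thesis
    using that by auto
qed

lemma is_nat_zero_if_not_le:
  assumes "is_nat (Pobj b) (Pobj a) \<gamma>" and "\<not> a \<le> b"
  shows "\<gamma> i = 0\<^sub>m (fdim (Pobj a) i) (fdim (Pobj b) i)"
  using is_thin assms unfolding thin_def by fastforce

lemma index_comp_through_Pobj:
  assumes u: "is_nat (Pobj m) (Pobj c) u" and v: "is_nat (Pobj c) (Pobj m) v"
    and d: "0 < fdim (Pobj m) i"
  shows "(v i * u i) $$ (0, 0) = (if Pobj c = Pobj m then v i $$ (0, 0) * u i $$ (0, 0) else 0)"
proof (cases "Pobj c = Pobj m")
  case True
  let ?n = "fdim (Pobj m) i"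
  have "is_nat (Pobj m) (Pobj m) u" and "is_nat (Pobj m) (Pobj m) v"
    using u v True by simp_all
  then obtain cu cv where cu: "u i = cu \<cdot>\<^sub>m 1\<^sub>m ?n" and cv: "v i = cv \<cdot>\<^sub>m 1\<^sub>m ?n"
    by (metis is_nat_endo_scalar)
  have "v i * u i = cv \<cdot>\<^sub>m (cu \<cdot>\<^sub>m (1\<^sub>m ?n * 1\<^sub>m ?n))"
    unfolding cu cv
    by (simp only: mult_smult_assoc_mat[OF one_carrier_mat smult_carrier_mat[OF one_carrier_mat]]
        mult_smult_distrib[OF one_carrier_mat one_carrier_mat])
  then show ?thesis
    using True d by (simp add: cu cv)
next
  case False
  let ?m = "fdim (Pobj m) i" and ?c = "fdim (Pobj c) i"
  have "\<not> c \<le> m \<or> \<not> m \<le> c"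
    using False by (auto dest: antisym)
  then have "v i * u i = 0\<^sub>m ?m ?m"
  proof
    assume "\<not> c \<le> m"
    then have "u i = 0\<^sub>m ?c ?m"
      by (rule is_nat_zero_if_not_le[OF u])
    then show ?thesis
      using right_mult_zero_mat[OF is_natD_carrier[OF v, of i]] by simp
  next
    assume "\<not> m \<le> c"
    then have "v i = 0\<^sub>m ?m ?c"
      by (rule is_nat_zero_if_not_le[OF v])
    then show ?thesis
      using left_mult_zero_mat[OF is_natD_carrier[OF u, of i]] by simp
  qed
  then show ?thesis
    using False d by simp
qed

lemma index_through_summand:
  assumes ys: "set ys \<subseteq> range Pobj" and l: "l < length ys"
    and \<alpha>: "is_nat (Pobj m) (fdsum_list ys) \<alpha>" and \<beta>: "is_nat (fdsum_list ys) (Pobj m) \<beta>"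
    and d: "0 < fdim (Pobj m) i"
  shows "(\<beta> i * fdsum_list_inj ys l i * (fdsum_list_proj ys l i * \<alpha> i)) $$ (0, 0) =
    (if ys ! l = Pobj m
     then (\<beta> i * fdsum_list_inj ys l i) $$ (0, 0) * (fdsum_list_proj ys l i * \<alpha> i) $$ (0, 0)
     else 0)"
proof -
  obtain c where c: "ys ! l = Pobj c"
    using ys l by (auto dest: nth_mem)
  have functors: "\<forall>M\<in>set ys. is_functor M"
    using ys is_functor_Pobj by auto
  note S = is_functor_fdsum_list[OF functors]
  have u: "is_nat (Pobj m) (Pobj c) (\<lambda>i. fdsum_list_proj ys l i * \<alpha> i)"
    using is_nat_comp[OF is_functor_Pobj S is_functor_Pobj \<alpha>
        is_nat_fdsum_list_proj[OF functors l, unfolded c]] .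
  have v: "is_nat (Pobj c) (Pobj m) (\<lambda>i. \<beta> i * fdsum_list_inj ys l i)"
    using is_nat_comp[OF is_functor_Pobj S is_functor_Pobj
        is_nat_fdsum_list_inj[OF functors l, unfolded c] \<beta>] .
  show ?thesis
    using index_comp_through_Pobj[OF u v d] c by simp
qed

lemma retract_pairing_on_copies:
  assumes xs: "set xs \<subseteq> range Pobj" and ys: "set ys \<subseteq> range Pobj"
    and \<phi>: "is_nat (fdsum_list xs) (fdsum_list ys) \<phi>"
    and \<psi>: "is_nat (fdsum_list ys) (fdsum_list xs) \<psi>"
    and retract: "\<And>i. \<psi> i * \<phi> i = 1\<^sub>m (fdim (fdsum_list xs) i)"
    and d: "0 < fdim (Pobj m) i"
    and k: "k < length xs" "xs ! k = Pobj m" and k': "k' < length xs" "xs ! k' = Pobj m"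
  shows "(\<Sum>l | l < length ys \<and> ys ! l = Pobj m.
      (fdsum_list_proj xs k' i * \<psi> i * fdsum_list_inj ys l i) $$ (0, 0) *
      (fdsum_list_proj ys l i * (\<phi> i * fdsum_list_inj xs k i)) $$ (0, 0)) = (if k' = k then 1 else 0)"
proof -
  have functors: "\<forall>M\<in>set xs. is_functor M" "\<forall>M\<in>set ys. is_functor M"
    using xs ys is_functor_Pobj by auto
  note Sx = is_functor_fdsum_list[OF functors(1)] and Sy = is_functor_fdsum_list[OF functors(2)]
  define \<alpha> where "\<alpha> i = \<phi> i * fdsum_list_inj xs k i" for i
  define \<beta> where "\<beta> i = fdsum_list_proj xs k' i * \<psi> i" for i
  have \<alpha>: "is_nat (Pobj m) (fdsum_list ys) \<alpha>"
    unfolding \<alpha>_def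
    using is_nat_comp[OF is_functor_Pobj Sx Sy
        is_nat_fdsum_list_inj[OF functors(1) k(1), unfolded k(2)] \<phi>] .
  have \<beta>: "is_nat (fdsum_list ys) (Pobj m) \<beta>"
    unfolding \<beta>_def
    using is_nat_comp[OF Sy Sx is_functor_Pobj \<psi>
        is_nat_fdsum_list_proj[OF functors(1) k'(1), unfolded k'(2)]] .
  have inj: "fdsum_list_inj xs k i \<in> carrier_mat (fdim (fdsum_list xs) i) (fdim (Pobj m) i)"
    and proj: "fdsum_list_proj xs k' i \<in> carrier_mat (fdim (Pobj m) i) (fdim (fdsum_list xs) i)"
    using fdsum_list_inj_carrier[OF k(1)] fdsum_list_proj_carrier[OF k'(1)] k k' by simp_all
  note \<phi>i = is_natD_carrier[OF \<phi>, of i] and \<psi>i = is_natD_carrier[OF \<psi>, of i]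
  have "\<beta> i * \<alpha> i = fdsum_list_proj xs k' i * (\<psi> i * \<phi> i) * fdsum_list_inj xs k i"
    unfolding \<alpha>_def \<beta>_def using \<psi>i \<phi>i inj
    by (simp add: assoc_mult_mat[OF proj \<psi>i mult_carrier_mat[OF \<phi>i inj]]
        assoc_mult_mat[OF proj mult_carrier_mat[OF \<psi>i \<phi>i] inj])
  also have "\<dots> = fdsum_list_proj xs k' i * fdsum_list_inj xs k i"
    using proj by (simp add: retract)
  finally have "(\<beta> i * \<alpha> i) $$ (0, 0) = (if k' = k then 1 else 0)"
    using fdsum_list_proj_inj[OF k'(1) k(1)] k k' d by simp
  moreover have "(\<beta> i * \<alpha> i) $$ (0, 0) =
      (\<Sum>l<length ys. (\<beta> i * fdsum_list_inj ys l i * (fdsum_list_proj ys l i * \<alpha> i)) $$ (0, 0))"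
    using is_natD_carrier[OF \<beta>] is_natD_carrier[OF \<alpha>] d d
    by (rule index_mult_eq_sum_through_summands)
  moreover have "\<dots> = (\<Sum>l<length ys. if ys ! l = Pobj m
      then (\<beta> i * fdsum_list_inj ys l i) $$ (0, 0) * (fdsum_list_proj ys l i * \<alpha> i) $$ (0, 0)
      else 0)"
    using index_through_summand[OF ys _ \<alpha> \<beta> d] by (intro sum.cong) simp_all
  moreover have "\<dots> = (\<Sum>l | l < length ys \<and> ys ! l = Pobj m.
      (\<beta> i * fdsum_list_inj ys l i) $$ (0, 0) * (fdsum_list_proj ys l i * \<alpha> i) $$ (0, 0))"
    by (simp add: sum.inter_filter[symmetric] lessThan_def)
  ultimately show ?thesis
    by (simp add: \<alpha>_def \<beta>_def)
qed

lemma count_list_le_if_retract: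
  assumes xs: "set xs \<subseteq> range Pobj" and ys: "set ys \<subseteq> range Pobj"
    and \<phi>: "is_nat (fdsum_list xs) (fdsum_list ys) \<phi>"
    and \<psi>: "is_nat (fdsum_list ys) (fdsum_list xs) \<psi>"
    and retract: "\<And>i. \<psi> i * \<phi> i = 1\<^sub>m (fdim (fdsum_list xs) i)"
    and nonzero: "\<not> is_zero_obj (Pobj m)"
  shows "count_list xs (Pobj m) \<le> count_list ys (Pobj m)"
proof -
  obtain i where d: "0 < fdim (Pobj m) i"
    using nonzero is_zero_obj_if_fdim_zero[OF is_functor_Pobj] by blast
  have "card {k. k < length xs \<and> xs ! k = Pobj m} \<le> card {l. l < length ys \<and> ys ! l = Pobj m}"
    by (rule card_le_if_pairing_is_identity
        [where a = "\<lambda>l k. (fdsum_list_proj ys l i * (\<phi> i * fdsum_list_inj xs k i)) $$ (0, 0)"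
          and b = "\<lambda>k' l. (fdsum_list_proj xs k' i * \<psi> i * fdsum_list_inj ys l i) $$ (0, 0)"])
      (use retract_pairing_on_copies[OF xs ys \<phi> \<psi> retract d] in auto)
  then show ?thesis
    by (simp add: count_list_eq_length_filter length_filter_conv_card eq_commute)
qed

lemma count_list_eq_if_fiso:
  assumes xs: "set xs \<subseteq> {Pobj a | a. \<not> is_zero_obj (Pobj a)}"
    and ys: "set ys \<subseteq> {Pobj a | a. \<not> is_zero_obj (Pobj a)}"
    and iso: "fiso (fdsum_list xs) (fdsum_list ys)"
  shows "count_list xs = count_list ys"
proof
  fix A
  show "count_list xs A = count_list ys A"
  proof (cases "\<exists>m. A = Pobj m \<and> \<not> is_zero_obj (Pobj m)")
    case True
    then obtain m where A: "A = Pobj m" and nonzero: "\<not> is_zero_obj (Pobj m)"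
      by blast
    obtain \<phi> \<psi> where \<phi>: "is_nat (fdsum_list xs) (fdsum_list ys) \<phi>"
      and \<psi>: "is_nat (fdsum_list ys) (fdsum_list xs) \<psi>"
      and inverse: "\<And>i. \<psi> i * \<phi> i = 1\<^sub>m (fdim (fdsum_list xs) i) \<and>
        \<phi> i * \<psi> i = 1\<^sub>m (fdim (fdsum_list ys) i)"
      using iso unfolding fiso_def by blast
    have "set xs \<subseteq> range Pobj" and "set ys \<subseteq> range Pobj"
      using xs ys by auto
    then have "count_list xs A \<le> count_list ys A" and "count_list ys A \<le> count_list xs A"
      unfolding A using count_list_le_if_retract \<phi> \<psi> inverse nonzero by blast+
    then show ?thesis
      by simp
  next
    case False
    then have "A \<notin> set xs" and "A \<notin> set ys"
      using xs ys by blast+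
    then show ?thesis
      by simp
  qed
qed

end

theorem proposition5p10:
  fixes Pobj :: "'j::{finite, order} \<Rightarrow> ('i::{finite, order}, 'k::field) fobj"
    and Pmap :: "'j \<Rightarrow> 'j \<Rightarrow> 'i \<Rightarrow> 'k mat"
  assumes "is_op_functor Pobj Pmap"
    and "thin Pobj Pmap"
  shows "independent {Pobj a | a. \<not> is_zero_obj (Pobj a)}"
proof -
  interpret thin_op_functor Pobj Pmap
    using assms by unfold_locales
  show ?thesis
    by (rule independentI_count_list) (auto intro: is_functor_Pobj count_list_eq_if_fiso)
qed

end
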